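(* Let $\lambda,\mu\in P^+$ and let $X\subseteq\mathcal{B}(\lambda)$, $Y\subseteq\mathcal{B}(\mu)$ be subsets. If $X\otimes Y$ is an extremal subset of $\mathcal{B}(\lambda)\otimes\mathcal{B}(\mu)$, then $e_i(X)\subseteq X\sqcup\{0\}$ for all $i\in I$. Furthermore, if in addition $e_i(Y)\subseteq Y\sqcup\{0\}$ for all $i\in I$, then $X$ is an extremal subset of $\mathcal{B}(\lambda)$.
   Context: $\mathfrak g$ is a complex semisimple Lie algebra with Dynkin index set $I$ and dominant weights $P^+$. For $\lambda\in P^+$, $\mathcal{B}(\lambda)$ is Kashiwara's crystal of the irreducible module of highest weight $\lambda$, with operators $e_i,f_i:\mathcal{B}(\lambda)\to\mathcal{B}(\lambda)\sqcup\{0\}$, $\varepsilon_i(b)=\max\{k:e_i^k(b)\ne0\}$, $\varphi_i(b)=\max\{k:f_i^k(b)\ne0\}$. The tensor product crystal $\mathcal{B}(\lambda)\otimes\mathcal{B}(\mu)$ has $e_i(b_1\otimes b_2)=e_i(b_1)\otimes b_2$ if $\varepsilon_i(b_2)\le\varphi_i(b_1)$, else $b_1\otimes e_i(b_2)$; $f_i(b_1\otimes b_2)=f_i(b_1)\otimes b_2$ if $\varepsilon_i(b_2)<\varphi_i(b_1)$, else $b_1\otimes f_i(b_2)$. An $i$-string is a connected component of the graph with edges $b\to f_i(b)$. A subset $X$ of a crystal $\mathcal{B}$ is extremal if $X$ is nonempty and for every $i\in I$ and every $i$-string $S$ of $\mathcal{B}$, $S\cap X$ is $\varnothing$, $S$,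 or $\{b\}$ with $b\in S$, $e_i(b)=0$. *)

theory Defs
  imports Main
begin

text \<open>An abstract (seminormal, finite) crystal: a carrier set with Kashiwara
operators e_i, f_i; the value None plays the role of 0.\<close>

record ('i, 'b) crystal =
  carrier :: "'b set"
  eop :: "'i \<Rightarrow> 'b \<Rightarrow> 'b option"
  fop :: "'i \<Rightarrow> 'b \<Rightarrow> 'b option"

definition epow :: "('i, 'b) crystal \<Rightarrow> 'i \<Rightarrow> nat \<Rightarrow> 'b \<Rightarrow> 'b option" where
  "epow C i k b = ((\<lambda>x. Option.bind x (eop C i)) ^^ k) (Some b)"

definition fpow :: "('i, 'b) crystal \<Rightarrow> 'i \<Rightarrow> nat \<Rightarrow> 'b \<Rightarrow> 'b option" where
  "fpow C i k b = ((\<lambda>x. Option.bind x (fop C i)) ^^ k) (Some b)"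

definition eps :: "('i, 'b) crystal \<Rightarrow> 'i \<Rightarrow> 'b \<Rightarrow> nat" where
  "eps C i b = (GREATEST k. epow C i k b \<noteq> None)"

definition phi :: "('i, 'b) crystal \<Rightarrow> 'i \<Rightarrow> 'b \<Rightarrow> nat" where
  "phi C i b = (GREATEST k. fpow C i k b \<noteq> None)"

definition finite_crystal :: "('i, 'b) crystal \<Rightarrow> bool" where
  "finite_crystal C \<longleftrightarrow>
     finite (carrier C) \<and>
     (\<forall>i b b'. b \<in> carrier C \<and> eop C i b = Some b' \<longrightarrow> b' \<in> carrier C) \<and>
     (\<forall>i b b'. b \<in> carrier C \<and> fop C i b = Some b' \<longrightarrow> b' \<in> carrier C) \<and>
     (\<forall>i b b'. b \<in> carrier C \<and> b' \<in> carrier C \<longrightarrow>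
        (eop C i b = Some b' \<longleftrightarrow> fop C i b' = Some b)) \<and>
     (\<forall>i b. b \<in> carrier C \<longrightarrow> (\<exists>k. epow C i k b = None) \<and> (\<exists>k. fpow C i k b = None))"

definition tensor :: "('i, 'b) crystal \<Rightarrow> ('i, 'c) crystal \<Rightarrow> ('i, 'b \<times> 'c) crystal" where
  "tensor C D =
     \<lparr> carrier = carrier C \<times> carrier D,
       eop = (\<lambda>i (b1, b2). if eps D i b2 \<le> phi C i b1
                             then map_option (\<lambda>x. (x, b2)) (eop C i b1)
                             else map_option (\<lambda>y. (b1, y)) (eop D i b2)),
       fop = (\<lambda>i (b1, b2). if eps D i b2 < phi C i b1
                             then map_option (\<lambda>x. (x, b2)) (fop C i b1)
                             else map_option (\<lambda>y. (b1, y)) (fop D i b2)) \<rparr>"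

definition istep :: "('i, 'b) crystal \<Rightarrow> 'i \<Rightarrow> ('b \<times> 'b) set" where
  "istep C i = {(b, b'). b \<in> carrier C \<and> b' \<in> carrier C \<and> fop C i b = Some b'}"

definition is_string :: "('i, 'b) crystal \<Rightarrow> 'i \<Rightarrow> 'b set \<Rightarrow> bool" where
  "is_string C i S \<longleftrightarrow>
     (\<exists>b \<in> carrier C. S = {b'. (b, b') \<in> (istep C i \<union> (istep C i)\<inverse>)\<^sup>*})"

definition extremal :: "('i, 'b) crystal \<Rightarrow> 'b set \<Rightarrow> bool" where
  "extremal C X \<longleftrightarrow> X \<noteq> {} \<and>
     (\<forall>i S. is_string C i S \<longrightarrow>
        S \<inter> X = {} \<or> S \<inter> X = S \<or> (\<exists>b \<in> S. S \<inter> X = {b} \<and> eop C i b = None))"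

definition e_closed :: "('i, 'b) crystal \<Rightarrow> 'b set \<Rightarrow> bool" where
  "e_closed C X \<longleftrightarrow> (\<forall>i x x'. x \<in> X \<and> eop C i x = Some x' \<longrightarrow> x' \<in> X)"

end

theory Submission
  imports Defs
begin

text \<open>
If \<open>e\<^sub>i x \<noteq> 0\<close>, then
\<open>e\<^sub>i (x \<otimes> y) \<noteq> 0\<close>, and iterating \<open>e\<^sub>i\<close> on \<open>x \<otimes> y\<close> lowers \<open>\<epsilon>\<^sub>i\<close> of the right factor
until it reaches \<open>\<phi>\<^sub>i(x)\<close> and then turns \<open>x\<close> into \<open>e\<^sub>i x\<close>; so for \<open>y \<in> Y\<close>
extremality puts the whole \<open>i\<close>-string of \<open>x \<otimes> y\<close> inside \<open>X \<otimes> Y\<close>, and that string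
contains some \<open>e\<^sub>i x \<otimes> y'\<close>. If \<open>\<epsilon>\<^sub>i(y) = 0\<close>, then \<open>b \<mapsto> b \<otimes> y\<close> embeds the
\<open>i\<close>-string of \<open>x\<close> into that of \<open>x \<otimes> y\<close> and \<open>e\<^sub>i (x \<otimes> y) = e\<^sub>i x \<otimes> y\<close>, so
extremality of \<open>X \<otimes> Y\<close> restricts to \<open>X\<close>; when \<open>Y\<close> is \<open>e\<^sub>i\<close>-closed such a
\<open>y \<in> Y\<close> is found by applying \<open>e\<^sub>i\<close> to any element of \<open>Y\<close> until it vanishes.
\<close>

definition iter_partial :: "('b \<Rightarrow> 'b option) \<Rightarrow> nat \<Rightarrow> 'b \<Rightarrow> 'b option" where
  "iter_partial g k b = ((\<lambda>x. Option.bind x g) ^^ k) (Some b)"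

definition run_length :: "('b \<Rightarrow> 'b option) \<Rightarrow> 'b \<Rightarrow> nat" where
  "run_length g b = (GREATEST k. iter_partial g k b \<noteq> None)"

lemma eps_eq_run_length: "eps C i = run_length (eop C i)"
  by (simp add: fun_eq_iff eps_def run_length_def epow_def iter_partial_def)

lemma phi_eq_run_length: "phi C i = run_length (fop C i)"
  by (simp add: fun_eq_iff phi_def run_length_def fpow_def iter_partial_def)

lemma iter_partial_0 [simp]: "iter_partial g 0 b = Some b"
  by (simp add: iter_partial_def)

lemma iter_partial_Suc: "iter_partial g (Suc k) b = Option.bind (g b) (iter_partial g k)"
proof -
  have "((\<lambda>x. Option.bind x g) ^^ k) None = None" for k
    by (induction k) simp_all
  then show ?thesis
    by (cases "g b") (simp_all add: iter_partial_def funpow_Suc_right del: funpow.simps)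
qed

lemma iter_partial_None_mono:
  "iter_partial g k b = None \<Longrightarrow> k \<le> m \<Longrightarrow> iter_partial g m b = None"
proof (induction m arbitrary: k b)
  case (Suc m)
  then show ?case
    by (cases k; cases "g b") (auto simp: iter_partial_Suc)
qed simp

lemma run_length_None: "g b = None \<Longrightarrow> run_length g b = 0"
  unfolding run_length_def
proof (rule Greatest_equality)
  fix k assume "g b = None" and "iter_partial g k b \<noteq> None"
  then show "k \<le> 0"
    by (cases k) (simp_all add: iter_partial_Suc)
qed simp

lemma run_length_Some:
  assumes "g b = Some b'" and "iter_partial g n b' = None"
  shows "run_length g b = Suc (run_length g b')"
proof -
  have bounded: "k \<le> n" if "iter_partial g k b' \<noteq> None" for k
    by (rule ccontr) (use that iter_partial_None_mono[OF assms(2), of k] in simp)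
  have shift: "iter_partial g (Suc k) b = iter_partial g k b'" for k
    using assms(1) by (simp add: iter_partial_Suc)
  have "iter_partial g (run_length g b') b' \<noteq> None"
    unfolding run_length_def by (rule GreatestI_nat[where k = 0 and b = n]) (simp_all add: bounded)
  moreover have "k \<le> run_length g b'" if "iter_partial g k b' \<noteq> None" for k
    unfolding run_length_def using that bounded by (rule Greatest_le_nat)
  ultimately show ?thesis
    unfolding run_length_def[of g b]
  proof (intro Greatest_equality)
    fix k assume "\<And>k. iter_partial g k b' \<noteq> None \<Longrightarrow> k \<le> run_length g b'"
      and "iter_partial g k b \<noteq> None"
    then show "k \<le> Suc (run_length g b')"
      by (cases k) (simp_all add: shift)
  qed (simp add: shift)
qed

lemma crystal_eop_SomeD:
  "finite_crystal C \<Longrightarrow> b \<in> carrier C \<Longrightarrow> eop C i b = Some b' \<Longrightarrow>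
     b' \<in> carrier C \<and> fop C i b' = Some b"
  unfolding finite_crystal_def by blast

lemma crystal_fop_SomeD:
  "finite_crystal C \<Longrightarrow> b \<in> carrier C \<Longrightarrow> fop C i b = Some b' \<Longrightarrow>
     b' \<in> carrier C \<and> eop C i b' = Some b"
  unfolding finite_crystal_def by blast

lemma crystal_strings_finite:
  "finite_crystal C \<Longrightarrow> b \<in> carrier C \<Longrightarrow>
     (\<exists>k. iter_partial (eop C i) k b = None) \<and> (\<exists>k. iter_partial (fop C i) k b = None)"
  unfolding finite_crystal_def epow_def fpow_def iter_partial_def by blast

lemma eps_eq_0: "eop C i b = None \<Longrightarrow> eps C i b = 0"
  by (simp add: eps_eq_run_length run_length_None)

lemma eps_eop:
  assumes "finite_crystal C" and "b \<in> carrier C" and "eop C i b = Some b'"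
  shows "eps C i b = Suc (eps C i b')"
proof -
  obtain n where "iter_partial (eop C i) n b' = None"
    using crystal_strings_finite[OF assms(1)] crystal_eop_SomeD[OF assms] by blast
  then show ?thesis
    unfolding eps_eq_run_length by (rule run_length_Some[of "eop C i", OF assms(3)])
qed

lemma phi_fop:
  assumes "finite_crystal C" and "b \<in> carrier C" and "fop C i b = Some b'"
  shows "phi C i b = Suc (phi C i b')"
proof -
  obtain n where "iter_partial (fop C i) n b' = None"
    using crystal_strings_finite[OF assms(1)] crystal_fop_SomeD[OF assms] by blast
  then show ?thesis
    unfolding phi_eq_run_length by (rule run_length_Some[of "fop C i", OF assms(3)])
qed

lemma phi_eop:
  "finite_crystal C \<Longrightarrow> b \<in> carrier C \<Longrightarrow> eop C i b = Some b' \<Longrightarrow> phi C i b' = Suc (phi C i b)"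
  by (meson crystal_eop_SomeD phi_fop)

lemma e_closed_has_eop_None:
  assumes "finite_crystal C" and "X \<subseteq> carrier C" and "e_closed C X" and "x \<in> X"
  shows "\<exists>x'\<in>X. eop C i x' = None"
  using assms(4)
proof (induction "eps C i x" arbitrary: x rule: less_induct)
  case less
  show ?case
  proof (cases "eop C i x")
    case (Some x')
    have "x' \<in> X"
      using assms(3) less.prems Some unfolding e_closed_def by blast
    moreover have "eps C i x' < eps C i x"
      using eps_eop[OF assms(1) _ Some] less.prems assms(2) by auto
    ultimately show ?thesis
      using less.hyps by blast
  qed (use less.prems in blast)
qed

definition istring :: "('i, 'b) crystal \<Rightarrow> 'i \<Rightarrow> 'b \<Rightarrow> 'b set" where
  "istring C i b = {b'. (b, b') \<in> (istep C i \<union> (istep C i)\<inverse>)\<^sup>*}"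

lemma is_string_iff: "is_string C i S \<longleftrightarrow> (\<exists>b\<in>carrier C. S = istring C i b)"
  by (simp add: is_string_def istring_def)

lemma istring_self: "b \<in> istring C i b"
  by (simp add: istring_def)

lemma istring_trans: "c \<in> istring C i b \<Longrightarrow> d \<in> istring C i c \<Longrightarrow> d \<in> istring C i b"
  unfolding istring_def mem_Collect_eq by (rule rtrancl_trans)

lemma istring_sym: "c \<in> istring C i b \<Longrightarrow> b \<in> istring C i c"
  unfolding istring_def mem_Collect_eq by (rule symD[OF sym_rtrancl[OF sym_Un_converse]])

lemma istring_eq: "c \<in> istring C i b \<Longrightarrow> istring C i c = istring C i b"
  using istring_trans istring_sym by (metis subsetI subset_antisym)

lemma fop_in_istring:
  "b \<in> carrier C \<Longrightarrow> b' \<in> carrier C \<Longrightarrow> fop C i b = Some b' \<Longrightarrow> b' \<in> istring C i b"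
  unfolding istring_def istep_def by (simp add: r_into_rtrancl)

lemma fop_in_istring_rev:
  "b \<in> carrier C \<Longrightarrow> b' \<in> carrier C \<Longrightarrow> fop C i b = Some b' \<Longrightarrow> b \<in> istring C i b'"
  by (rule istring_sym, rule fop_in_istring)

lemma extremal_istring_not_subset:
  assumes "extremal C X" and "b \<in> carrier C" and "b \<in> X"
    and "\<not> istring C i b \<subseteq> X"
  shows "istring C i b \<inter> X = {b}" and "eop C i b = None"
proof -
  let ?S = "istring C i b"
  have "is_string C i ?S"
    using assms(2) by (auto simp: is_string_iff)
  then have "?S \<inter> X = {} \<or> ?S \<inter> X = ?S \<or> (\<exists>c\<in>?S. ?S \<inter> X = {c} \<and> eop C i c = None)"
    using assms(1) unfolding extremal_def by blast
  moreover have b: "b \<in> ?S \<inter> X"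
    by (simp add: istring_self assms(3))
  moreover have "?S \<inter> X \<noteq> ?S"
    using assms(4) by blast
  ultimately obtain c where c: "?S \<inter> X = {c}" and "eop C i c = None"
    by blast
  moreover have "c = b"
    using b c by simp
  ultimately show "?S \<inter> X = {b}" and "eop C i b = None"
    by simp_all
qed

lemma tensor_carrier [simp]: "carrier (tensor C D) = carrier C \<times> carrier D"
  by (simp add: tensor_def)

lemma tensor_eop:
  "eop (tensor C D) i (x, y) =
     (if eps D i y \<le> phi C i x then map_option (\<lambda>x'. (x', y)) (eop C i x)
      else map_option (\<lambda>y'. (x, y')) (eop D i y))"
  by (simp add: tensor_def)

lemma tensor_fop:
  "fop (tensor C D) i (x, y) =
     (if eps D i y < phi C i x then map_option (\<lambda>x'. (x', y)) (fop C i x)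
      else map_option (\<lambda>y'. (x, y')) (fop D i y))"
  by (simp add: tensor_def)

lemma tensor_eop_SomeD:
  assumes "finite_crystal C" and "finite_crystal D" and "x \<in> carrier C" and "y \<in> carrier D"
    and "eop (tensor C D) i (x, y) = Some q"
  shows "q \<in> carrier (tensor C D) \<and> fop (tensor C D) i q = Some (x, y)"
proof (cases "eps D i y \<le> phi C i x")
  case True
  then obtain x' where x': "eop C i x = Some x'" and q: "q = (x', y)"
    using assms(5) by (auto simp: tensor_eop)
  have "eps D i y < phi C i x'"
    using True phi_eop[OF assms(1,3) x'] by simp
  then show ?thesis
    using crystal_eop_SomeD[OF assms(1,3) x'] q assms(4) by (simp add: tensor_fop)
next
  case False
  then obtain y' where y': "eop D i y = Some y'" and q: "q = (x, y')"
    using assms(5) by (auto simp: tensor_eop)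
  have "\<not> eps D i y' < phi C i x"
    using False eps_eop[OF assms(2,4) y'] by simp
  then show ?thesis
    using crystal_eop_SomeD[OF assms(2,4) y'] q assms(3) by (simp add: tensor_fop)
qed

lemma tensor_eop_in_istring:
  assumes "finite_crystal C" and "finite_crystal D" and "x \<in> carrier C" and "y \<in> carrier D"
    and "eop (tensor C D) i (x, y) = Some q"
  shows "q \<in> istring (tensor C D) i (x, y)"
  using tensor_eop_SomeD[OF assms] assms(3,4) by (intro fop_in_istring_rev) auto

lemma tensor_eop_neq_None: "eop C i x \<noteq> None \<Longrightarrow> eop (tensor C D) i (x, y) \<noteq> None"
  using eps_eq_0[of D i y] by (cases "eop D i y") (auto simp: tensor_eop)

lemma tensor_istring_meets_eop_left:
  assumes "finite_crystal C" and "finite_crystal D" and "x \<in> carrier C" and "y \<in> carrier D"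
    and "eop C i x = Some x'"
  shows "\<exists>y'. (x', y') \<in> istring (tensor C D) i (x, y)"
  using assms(4)
proof (induction "eps D i y" arbitrary: y rule: less_induct)
  case less
  show ?case
  proof (cases "eps D i y \<le> phi C i x")
    case True
    then have "eop (tensor C D) i (x, y) = Some (x', y)"
      using assms(5) by (simp add: tensor_eop)
    then show ?thesis
      using tensor_eop_in_istring[OF assms(1-3) less.prems] by blast
  next
    case False
    then have "eop D i y \<noteq> None"
      using eps_eq_0[of D i y] by auto
    then obtain y1 where y1: "eop D i y = Some y1"
      by blast
    then have "eop (tensor C D) i (x, y) = Some (x, y1)"
      using False by (simp add: tensor_eop)
    then have step: "(x, y1) \<in> istring (tensor C D) i (x, y)"
      using tensor_eop_in_istring[OF assms(1-3) less.prems] by blast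
    have "y1 \<in> carrier D" and "eps D i y1 < eps D i y"
      using crystal_eop_SomeD[OF assms(2) less.prems y1] eps_eop[OF assms(2) less.prems y1] by auto
    then obtain y' where "(x', y') \<in> istring (tensor C D) i (x, y1)"
      using less.hyps by blast
    then show ?thesis
      using istring_trans[OF step] by blast
  qed
qed

lemma tensor_istring_eps_0:
  assumes "finite_crystal C" and "y \<in> carrier D" and "eps D i y = 0"
    and "z \<in> istring C i x"
  shows "(z, y) \<in> istring (tensor C D) i (x, y)"
proof -
  have edge: "(v, y) \<in> istring (tensor C D) i (u, y) \<and> (u, y) \<in> istring (tensor C D) i (v, y)"
    if "(u, v) \<in> istep C i" for u v
  proof -
    have u: "u \<in> carrier C" and v: "v \<in> carrier C" and fu: "fop C i u = Some v"
      using that by (auto simp: istep_def)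
    have f: "fop (tensor C D) i (u, y) = Some (v, y)"
      using assms(3) phi_fop[OF assms(1) u fu] fu by (simp add: tensor_fop)
    have uy: "(u, y) \<in> carrier (tensor C D)" and vy: "(v, y) \<in> carrier (tensor C D)"
      using u v assms(2) by simp_all
    show ?thesis
      using fop_in_istring[OF uy vy f] fop_in_istring_rev[OF uy vy f] ..
  qed
  have "(x, z) \<in> (istep C i \<union> (istep C i)\<inverse>)\<^sup>*"
    using assms(4) by (simp add: istring_def)
  then show ?thesis
  proof (induction rule: rtrancl_induct)
    case base
    show ?case by (rule istring_self)
  next
    case (step u v)
    from step.hyps(2) have "(v, y) \<in> istring (tensor C D) i (u, y)"
    proof
      assume "(u, v) \<in> istep C i"
      then show ?thesis
        using edge by blast
    next
      assume "(u, v) \<in> (istep C i)\<inverse>"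
      then show ?thesis
        using edge[of v u] by simp
    qed
    then show ?case
      by (rule istring_trans[OF step.IH])
  qed
qed

lemma extremal_tensor_e_closed_left:
  assumes "finite_crystal C" and "finite_crystal D"
    and "X \<subseteq> carrier C" and "Y \<subseteq> carrier D"
    and "extremal (tensor C D) (X \<times> Y)"
  shows "e_closed C X"
  unfolding e_closed_def
proof (intro allI impI, elim conjE)
  fix i x x' assume x: "x \<in> X" and x': "eop C i x = Some x'"
  obtain y where y: "y \<in> Y"
    using assms(5) by (auto simp: extremal_def)
  have xy: "(x, y) \<in> carrier (tensor C D)"
    using x y assms(3,4) by auto
  have xy_in: "(x, y) \<in> X \<times> Y"
    using x y by simp
  have "eop (tensor C D) i (x, y) \<noteq> None"
    using tensor_eop_neq_None[of C i x D y] x' by simp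
  then have "istring (tensor C D) i (x, y) \<subseteq> X \<times> Y"
    using extremal_istring_not_subset(2)[OF assms(5) xy xy_in] by (rule contrapos_np)
  moreover obtain y' where "(x', y') \<in> istring (tensor C D) i (x, y)"
    using tensor_istring_meets_eop_left[OF assms(1,2) _ _ x'] xy by auto
  ultimately show "x' \<in> X"
    by blast
qed

lemma extremal_tensor_istring_left:
  assumes "finite_crystal C" and "X \<subseteq> carrier C" and "Y \<subseteq> carrier D"
    and "extremal (tensor C D) (X \<times> Y)"
    and "x \<in> X" and "y \<in> Y" and "eop D i y = None"
  shows "istring C i x \<subseteq> X \<or> (istring C i x \<inter> X = {x} \<and> eop C i x = None)"
proof -
  have embed: "(z, y) \<in> istring (tensor C D) i (x, y)" if "z \<in> istring C i x" for z
    using tensor_istring_eps_0[OF assms(1) _ eps_eq_0[OF assms(7)] that] assms(3,6) by blast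
  show ?thesis
  proof (cases "istring (tensor C D) i (x, y) \<subseteq> X \<times> Y")
    case True
    then show ?thesis
      using embed by blast
  next
    case False
    have xy: "(x, y) \<in> carrier (tensor C D)" and xy_in: "(x, y) \<in> X \<times> Y"
      using assms(2,3,5,6) by auto
    note single = extremal_istring_not_subset[OF assms(4) xy xy_in False]
    have "istring C i x \<inter> X \<subseteq> {x}"
    proof
      fix z assume "z \<in> istring C i x \<inter> X"
      then have "(z, y) \<in> istring (tensor C D) i (x, y) \<inter> (X \<times> Y)"
        using embed assms(6) by simp
      then show "z \<in> {x}"
        using single(1) by simp
    qed
    then have "istring C i x \<inter> X = {x}"
      using istring_self[of x C i] assms(5) by blast
    moreover have "eop C i x = None"
      using single(2) eps_eq_0[OF assms(7)] by (simp add: tensor_eop)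
    ultimately show ?thesis
      by blast
  qed
qed

lemma extremal_tensor_extremal_left:
  assumes "finite_crystal C" and "finite_crystal D"
    and "X \<subseteq> carrier C" and "Y \<subseteq> carrier D"
    and "extremal (tensor C D) (X \<times> Y)" and "e_closed D Y"
  shows "extremal C X"
  unfolding extremal_def
proof (intro conjI allI impI)
  show "X \<noteq> {}"
    using assms(5) by (auto simp: extremal_def)
  fix i S assume "is_string C i S"
  show "S \<inter> X = {} \<or> S \<inter> X = S \<or> (\<exists>b\<in>S. S \<inter> X = {b} \<and> eop C i b = None)"
  proof (cases "S \<inter> X = {}")
    case False
    then obtain x where xS: "x \<in> S" and x: "x \<in> X"
      by blast
    obtain b where "S = istring C i b"
      using \<open>is_string C i S\<close> unfolding is_string_iff by blast
    then have S: "S = istring C i x"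
      using istring_eq[of x C i b] xS by simp
    obtain y0 where "y0 \<in> Y"
      using assms(5) by (auto simp: extremal_def)
    then obtain y where "y \<in> Y" and "eop D i y = None"
      using e_closed_has_eop_None[OF assms(2,4,6)] by blast
    then have "S \<subseteq> X \<or> (S \<inter> X = {x} \<and> eop C i x = None)"
      unfolding S using extremal_tensor_istring_left[OF assms(1,3-5) x] by blast
    then show ?thesis
      using xS by blast
  qed simp
qed

theorem proposition8p1:
  fixes C :: "('i, 'b) crystal" and D :: "('i, 'c) crystal"
    and X :: "'b set" and Y :: "'c set"
  assumes "finite_crystal C" and "finite_crystal D"
    and "X \<subseteq> carrier C" and "Y \<subseteq> carrier D"
    and "extremal (tensor C D) (X \<times> Y)"
  shows "e_closed C X \<and> (e_closed D Y \<longrightarrow> extremal C X)"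
  using extremal_tensor_e_closed_left[OF assms] extremal_tensor_extremal_left[OF assms]
  by blast

end
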